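(* There exists a fragile graph containing no cycle of length $4$ and having chromatic number $4$.
   Context: All graphs are finite and simple. A graph is $k$-connected if it has at least $k+1$ vertices and no vertex cutset with at most $k-1$ vertices. A graph is fragile if it has no $3$-connected subgraph. *)

theory Defs
  imports Main
begin

definition graph :: "'a set \<Rightarrow> 'a set set \<Rightarrow> bool" where
  "graph V E \<longleftrightarrow> finite V \<and> (\<forall>e\<in>E. \<exists>u v. e = {u, v} \<and> u \<noteq> v \<and> u \<in> V \<and> v \<in> V)"

definition subgraph :: "'a set \<Rightarrow> 'a set set \<Rightarrow> 'a set \<Rightarrow> 'a set set \<Rightarrow> bool" where
  "subgraph W F V E \<longleftrightarrow> W \<subseteq> V \<and> F \<subseteq> E \<and> (\<forall>e\<in>F. e \<subseteq> W)"

inductive reachable :: "'a set \<Rightarrow> 'a set set \<Rightarrow> 'a \<Rightarrow> 'a \<Rightarrow> bool" for V E where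
  refl: "v \<in> V \<Longrightarrow> reachable V E v v"
| step: "reachable V E u v \<Longrightarrow> {v, w} \<in> E \<Longrightarrow> w \<in> V \<Longrightarrow> reachable V E u w"

definition connected_graph :: "'a set \<Rightarrow> 'a set set \<Rightarrow> bool" where
  "connected_graph V E \<longleftrightarrow> (\<forall>u\<in>V. \<forall>v\<in>V. reachable V E u v)"

definition del_verts :: "'a set set \<Rightarrow> 'a set \<Rightarrow> 'a set set" where
  "del_verts E S = {e \<in> E. e \<inter> S = {}}"

definition k_connected :: "nat \<Rightarrow> 'a set \<Rightarrow> 'a set set \<Rightarrow> bool" where
  "k_connected k V E \<longleftrightarrow> card V \<ge> k + 1 \<and>
     (\<forall>S. S \<subseteq> V \<and> card S \<le> k - 1 \<longrightarrow> connected_graph (V - S) (del_verts E S))"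

definition fragile :: "'a set \<Rightarrow> 'a set set \<Rightarrow> bool" where
  "fragile V E \<longleftrightarrow> \<not> (\<exists>W F. subgraph W F V E \<and> k_connected 3 W F)"

definition has_C4 :: "'a set \<Rightarrow> 'a set set \<Rightarrow> bool" where
  "has_C4 V E \<longleftrightarrow> (\<exists>a b c d. a \<in> V \<and> b \<in> V \<and> c \<in> V \<and> d \<in> V \<and> distinct [a, b, c, d] \<and>
      {a, b} \<in> E \<and> {b, c} \<in> E \<and> {c, d} \<in> E \<and> {d, a} \<in> E)"

definition proper_colouring :: "'a set \<Rightarrow> 'a set set \<Rightarrow> nat \<Rightarrow> ('a \<Rightarrow> nat) \<Rightarrow> bool" where
  "proper_colouring V E k c \<longleftrightarrow> (\<forall>v\<in>V. c v < k) \<and> (\<forall>u v. {u, v} \<in> E \<longrightarrow> u \<noteq> v \<longrightarrow> c u \<noteq> c v)"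

definition chromatic_number :: "'a set \<Rightarrow> 'a set set \<Rightarrow> nat" where
  "chromatic_number V E = (LEAST k. \<exists>c. proper_colouring V E k c)"

end

theory Submission
  imports Defs
begin

text \<open>The graph G has a triangle 0, 1, 2, a vertex 3, and for each i < 3 a gadget on
the vertices 4 + 6i, ..., 9 + 6i: two triangles joined by an edge, touching the rest of G only
in i and 3. In any 3-colouring a gadget forces different colours on i and 3, so 0, 1, 2, 3 would
need four colours. Any two vertices of G have at most one common neighbour, so G has no C4.
A 3-connected subgraph has minimum degree at least 3 and cannot be separated by two vertices.
As {i, 3} separates gadget i from the rest, such a subgraph would lie inside gadget i together
with i and 3, or inside {0, 1, 2, 3}; but both of these vertex sets admit an ordering in which
every vertex has at most two later neighbours, which rules out minimum degree 3.\<close>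

lemma reachable_invariant:
  assumes "reachable V E u v" "P u" "\<And>x y. P x \<Longrightarrow> {x, y} \<in> E \<Longrightarrow> y \<in> V \<Longrightarrow> P y"
  shows "P v"
  using assms by (induction rule: reachable.induct) auto

lemma k_connected_reachable_after_deletion:
  assumes "k_connected k W F" "S \<subseteq> W" "card S < k" "u \<in> W - S" "v \<in> W - S"
  shows "reachable (W - S) (del_verts F S) u v"
proof -
  have "card S \<le> k - 1" using assms(3) by linarith
  with assms show ?thesis unfolding k_connected_def connected_graph_def by blast
qed

lemma k_connected_min_degree:
  assumes conn: "k_connected k W F" and "finite W" and w: "w \<in> W"
  shows "k \<le> card {u \<in> W. u \<noteq> w \<and> {w, u} \<in> F}"
proof (rule ccontr)
  let ?N = "{u \<in> W. u \<noteq> w \<and> {w, u} \<in> F}"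
  assume small: "\<not> k \<le> card ?N"
  have "finite ?N" using \<open>finite W\<close> by simp
  then have "card (insert w ?N) \<le> k"
    using small by (simp add: card_insert_if)
  also have "k < card W" using conn unfolding k_connected_def by simp
  finally have "\<not> W \<subseteq> insert w ?N"
    using \<open>finite ?N\<close> by (meson card_mono finite_insert leD)
  then obtain z where z: "z \<in> W" "z \<notin> insert w ?N" by blast
  have "reachable (W - ?N) (del_verts F ?N) w z"
    using small w z by (intro k_connected_reachable_after_deletion[OF conn]) auto
  then have "z = w"
    by (rule reachable_invariant[where P = "\<lambda>y. y = w"]) (auto simp: del_verts_def)
  with z show False by simp
qed

lemma k_connected_separation:
  assumes conn: "k_connected k W F" and S: "S \<subseteq> W" "card S < k"
    and a: "a \<in> W - S" "a \<in> I"
    and closed: "\<And>v u. v \<in> I \<Longrightarrow> {v, u} \<in> F \<Longrightarrow> u \<in> I \<union> S"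
  shows "W \<subseteq> I \<union> S"
proof
  fix b assume "b \<in> W"
  show "b \<in> I \<union> S"
  proof (cases "b \<in> S")
    case False
    with \<open>b \<in> W\<close> have "reachable (W - S) (del_verts F S) a b"
      using k_connected_reachable_after_deletion[OF conn S a(1)] by blast
    then have "b \<in> I"
      by (rule reachable_invariant[where P = "\<lambda>y. y \<in> I"])
        (use a closed in \<open>auto simp: del_verts_def\<close>)
    then show ?thesis by simp
  qed simp
qed

fun degenerate_ordering :: "nat \<Rightarrow> 'a set set \<Rightarrow> 'a list \<Rightarrow> bool" where
  "degenerate_ordering d E [] \<longleftrightarrow> True"
| "degenerate_ordering d E (v # vs) \<longleftrightarrow>
     length (filter (\<lambda>u. {v, u} \<in> E) vs) \<le> d \<and> degenerate_ordering d E vs"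

lemma degenerate_ordering_no_dense_subset:
  assumes "degenerate_ordering d E vs" "W \<subseteq> set vs"
    and dense: "\<forall>w\<in>W. d < card {u \<in> W. u \<noteq> w \<and> {w, u} \<in> E}"
  shows "W = {}"
  using assms(1,2)
proof (induction vs)
  case (Cons v vs)
  let ?later = "filter (\<lambda>u. {v, u} \<in> E) vs"
  have "v \<notin> W"
  proof
    assume "v \<in> W"
    have "{u \<in> W. u \<noteq> v \<and> {v, u} \<in> E} \<subseteq> set ?later"
      using Cons.prems(2) by auto
    then have "card {u \<in> W. u \<noteq> v \<and> {v, u} \<in> E} \<le> length ?later"
      by (meson List.finite_set card_length card_mono le_trans)
    moreover have "d < card {u \<in> W. u \<noteq> v \<and> {v, u} \<in> E}" using dense \<open>v \<in> W\<close> by blast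
    moreover have "length ?later \<le> d" using Cons.prems(1) by simp
    ultimately show False by linarith
  qed
  with Cons show ?case by auto
qed simp

definition edges_of :: "('a \<times> 'a) list \<Rightarrow> 'a set set" where
  "edges_of es = {{u, v} | u v. (u, v) \<in> set es}"

lemma mem_edges_of: "{a, b} \<in> edges_of es \<longleftrightarrow> (a, b) \<in> set es \<or> (b, a) \<in> set es"
  unfolding edges_of_def by (auto simp: doubleton_eq_iff)

lemma graph_edges_of:
  assumes "finite V" "\<forall>(u, v) \<in> set es. u \<noteq> v \<and> u \<in> V \<and> v \<in> V"
  shows "graph V (edges_of es)"
  using assms unfolding graph_def edges_of_def by blast

lemma graph_edgeD:
  assumes "graph V E" "{u, v} \<in> E"
  shows "u \<noteq> v" "u \<in> V" "v \<in> V"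
  using assms unfolding graph_def by (auto simp: doubleton_eq_iff)

definition wedges :: "('a \<times> 'a) list \<Rightarrow> ('a \<times> 'a \<times> 'a) list" where
  "wedges es = (let arcs = es @ map prod.swap es in
     [(a, b, c). (a, b) \<leftarrow> arcs, (b', c) \<leftarrow> arcs, b' = b \<and> a \<noteq> c])"

lemma mem_wedges:
  "(a, b, c) \<in> set (wedges es) \<longleftrightarrow> {a, b} \<in> edges_of es \<and> {b, c} \<in> edges_of es \<and> a \<noteq> c"
  unfolding wedges_def mem_edges_of by (auto simp: Let_def)

lemma no_C4_if_wedge_ends_distinct:
  assumes "distinct (map (\<lambda>(a, b, c). (a, c)) (wedges es))"
  shows "\<not> has_C4 V (edges_of es)"
proof
  assume "has_C4 V (edges_of es)"
  then obtain a b c d where "distinct [a, b, c, d]"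
    "{a, b} \<in> edges_of es" "{b, c} \<in> edges_of es" "{c, d} \<in> edges_of es" "{d, a} \<in> edges_of es"
    unfolding has_C4_def by blast
  then have wedges: "(a, b, c) \<in> set (wedges es)" "(a, d, c) \<in> set (wedges es)" and "b \<noteq> d"
    by (auto simp: mem_wedges insert_commute)
  have "inj_on (\<lambda>(a, b, c). (a, c)) (set (wedges es))"
    using assms by (simp add: distinct_map)
  then have "(a, b, c) = (a, d, c)" by (rule inj_onD) (simp_all add: wedges)
  with \<open>b \<noteq> d\<close> show False by simp
qed

lemma proper_colouring_edges_of:
  assumes "\<forall>v \<in> V. c v < k" "\<forall>(u, v) \<in> set es. c u \<noteq> c v"
  shows "proper_colouring V (edges_of es) k c"
  using assms unfolding proper_colouring_def by (auto simp: mem_edges_of)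

lemma proper_colouring_mono:
  "proper_colouring V E k c \<Longrightarrow> k \<le> l \<Longrightarrow> proper_colouring V E l c"
  unfolding proper_colouring_def by fastforce

lemma chromatic_number_eqI:
  assumes "proper_colouring V E k c" "\<And>l c'. proper_colouring V E l c' \<Longrightarrow> k \<le> l"
  shows "chromatic_number V E = k"
  unfolding chromatic_number_def using assms by (blast intro: Least_equality)

lemma triangle_third_colour:
  fixes a b c d :: nat
  assumes "a < 3" "b < 3" "c < 3" "d < 3" "a \<noteq> b" "a \<noteq> c" "b \<noteq> c" "d \<noteq> a" "d \<noteq> c"
  shows "d = b"
  using assms by arith

definition gadget_edges :: "nat \<Rightarrow> nat \<Rightarrow> nat \<Rightarrow> (nat \<times> nat) list" where
  "gadget_edges x y n =
     [(n, n+1), (n, n+2), (n+1, n+2), (n, x), (n+2, y), (n+1, n+4),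
      (y, n+3), (n+3, n+4), (n+3, n+5), (n+4, n+5), (n+5, x)]"

lemma gadget_forces_distinct_colours:
  assumes G: "graph V E" and c: "proper_colouring V E 3 c"
    and gadget: "\<forall>(u, v) \<in> set (gadget_edges x y n). {u, v} \<in> E"
  shows "c x \<noteq> c y"
proof
  have adj: "c u \<noteq> c v \<and> c u < 3 \<and> c v < 3" if "(u, v) \<in> set (gadget_edges x y n)" for u v
  proof -
    have e: "{u, v} \<in> E" using gadget that by blast
    show ?thesis using graph_edgeD[OF G e] c e unfolding proper_colouring_def by blast
  qed
  have d: "c n \<noteq> c (n+1)" "c n \<noteq> c (n+2)" "c (n+1) \<noteq> c (n+2)" "c n \<noteq> c x"
    "c (n+2) \<noteq> c y" "c (n+1) \<noteq> c (n+4)" "c y \<noteq> c (n+3)" "c (n+3) \<noteq> c (n+4)"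
    "c (n+3) \<noteq> c (n+5)" "c (n+4) \<noteq> c (n+5)" "c (n+5) \<noteq> c x"
    and b: "c n < 3" "c (n+1) < 3" "c (n+2) < 3" "c (n+3) < 3" "c (n+4) < 3" "c (n+5) < 3"
    "c x < 3"
    using adj[of n "n+1"] adj[of "n+1" "n+2"] adj[of "n+3" "n+4"] adj[of "n+4" "n+5"] adj[of n x]
    by (simp_all add: adj gadget_edges_def)
  assume same: "c x = c y"
  have "c x = c (n+1)"
    using d(4,5) same by (intro triangle_third_colour[OF b(1-3,7) d(1-3)]) auto
  moreover have "c x = c (n+4)"
    using d(7,11) same by (intro triangle_third_colour[OF b(4-7) d(8-10)]) auto
  ultimately show False using d(6) by simp
qed

definition G_edge_list :: "(nat \<times> nat) list" where
  "G_edge_list =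
     [(0, 1), (0, 2), (1, 2)] @ gadget_edges 0 3 4 @ gadget_edges 1 3 10 @ gadget_edges 2 3 16"

definition G_V :: "nat set" where "G_V = {..<22}"

definition G_E :: "nat set set" where "G_E = edges_of G_edge_list"

definition G_gadget :: "nat \<Rightarrow> nat set" where "G_gadget i = {4 + 6 * i ..< 10 + 6 * i}"

definition G_gadget_order :: "nat \<Rightarrow> nat list" where
  "G_gadget_order i = [i, 3, 6 + 6 * i, 4 + 6 * i, 5 + 6 * i, 7 + 6 * i, 8 + 6 * i, 9 + 6 * i]"

definition G_colouring :: "nat \<Rightarrow> nat" where
  "G_colouring v = [0, 1, 2, 0, 1, 0, 2, 1, 2, 3, 0, 1, 2, 1, 0, 2, 0, 1, 2, 1, 0, 3] ! v"

lemma G_graph: "graph G_V G_E"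
  unfolding G_E_def G_V_def by (rule graph_edges_of) (simp, code_simp)

lemma G_no_C4: "\<not> has_C4 G_V G_E"
  unfolding G_E_def by (rule no_C4_if_wedge_ends_distinct) code_simp

lemma G_four_colouring: "proper_colouring G_V G_E 4 G_colouring"
  unfolding G_E_def G_V_def by (rule proper_colouring_edges_of) code_simp+

lemma G_gadget_edges:
  assumes "i < 3"
  shows "\<forall>(u, v) \<in> set (gadget_edges i 3 (4 + 6 * i)). {u, v} \<in> G_E"
proof -
  from assms have "i = 0 \<or> i = 1 \<or> i = 2" by auto
  then show ?thesis by (auto simp: G_E_def mem_edges_of G_edge_list_def)
qed

lemma G_no_three_colouring:
  assumes "proper_colouring G_V G_E k c"
  shows "4 \<le> k"
proof (rule ccontr)
  assume "\<not> 4 \<le> k"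
  with assms have c: "proper_colouring G_V G_E 3 c"
    by (auto intro: proper_colouring_mono)
  have apex: "c i \<noteq> c 3" if "i < 3" for i
    using gadget_forces_distinct_colours[OF G_graph c G_gadget_edges[OF that]] .
  have "{0, 1} \<in> G_E" "{0, 2} \<in> G_E" "{1, 2} \<in> G_E"
    by (simp_all add: G_E_def mem_edges_of G_edge_list_def)
  then have "c 0 \<noteq> c 1" "c 0 \<noteq> c 2" "c 1 \<noteq> c 2"
    using c unfolding proper_colouring_def by auto
  moreover have "c v < 3" if "v < 22" for v
    using c that unfolding proper_colouring_def G_V_def by auto
  ultimately have "c 3 = c 1"
    using triangle_third_colour[of "c 0" "c 1" "c 2" "c 3"] apex[of 0] apex[of 2] by simp
  with apex[of 1] show False by simp
qed

lemma G_gadget_closed: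
  assumes "i < 3" "v \<in> G_gadget i" "{v, u} \<in> G_E"
  shows "u \<in> G_gadget i \<union> {i, 3}"
proof -
  have "\<forall>i \<in> set [0..<3]. \<forall>(u, v) \<in> set G_edge_list.
      (u \<in> G_gadget i \<longrightarrow> v \<in> G_gadget i \<union> {i, 3}) \<and> (v \<in> G_gadget i \<longrightarrow> u \<in> G_gadget i \<union> {i, 3})"
    by code_simp
  then show ?thesis using assms unfolding G_E_def mem_edges_of by fastforce
qed

lemma G_gadget_degenerate:
  assumes "i < 3"
  shows "degenerate_ordering 2 G_E (G_gadget_order i)"
proof -
  from assms have "i = 0 \<or> i = 1 \<or> i = 2" by auto
  then show ?thesis
    by (elim disjE)
      (simp_all add: G_gadget_order_def G_E_def mem_edges_of G_edge_list_def gadget_edges_def)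
qed

lemma G_core_degenerate: "degenerate_ordering 2 G_E [3, 0, 1, 2]"
  by (simp add: G_E_def mem_edges_of G_edge_list_def gadget_edges_def)

lemma G_vertex_cases: "v \<in> G_V \<Longrightarrow> v \<in> {0, 1, 2, 3} \<or> (\<exists>i < 3. v \<in> G_gadget i)"
  unfolding G_V_def G_gadget_def atLeastLessThan_iff lessThan_iff insert_iff empty_iff by presburger

lemma G_3_connected_subgraph_location:
  assumes sub: "subgraph W F G_V G_E" and conn: "k_connected 3 W F"
  shows "W \<subseteq> set [3, 0, 1, 2] \<or> (\<exists>i < 3. W \<subseteq> set (G_gadget_order i))"
proof (cases "\<exists>i < 3. W \<inter> G_gadget i \<noteq> {}")
  case True
  then obtain i a where i: "i < 3" and a: "a \<in> W" "a \<in> G_gadget i" by blast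
  have "F \<subseteq> G_E" "\<forall>e \<in> F. e \<subseteq> W" using sub unfolding subgraph_def by auto
  have "W \<subseteq> G_gadget i \<union> W \<inter> {i, 3}"
  proof (rule k_connected_separation[OF conn])
    have "card (W \<inter> {i, 3}) \<le> card {i, 3}" by (intro card_mono) auto
    also have "\<dots> \<le> 2" by (simp add: card_insert_if)
    finally show "card (W \<inter> {i, 3}) < 3" by simp
    show "a \<in> W - W \<inter> {i, 3}" using a i by (auto simp: G_gadget_def)
    show "u \<in> G_gadget i \<union> W \<inter> {i, 3}" if "v \<in> G_gadget i" "{v, u} \<in> F" for v u
      using G_gadget_closed[OF i that(1)] that(2) \<open>F \<subseteq> G_E\<close> \<open>\<forall>e \<in> F. e \<subseteq> W\<close> by blast
  qed (use a in auto)
  also have "\<dots> \<subseteq> set (G_gadget_order i)"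
    by (auto simp: G_gadget_def G_gadget_order_def)
  finally show ?thesis using i by blast
next
  case False
  have "W \<subseteq> G_V" using sub unfolding subgraph_def by simp
  have "W \<subseteq> set [3, 0, 1, 2]"
  proof
    fix v assume "v \<in> W"
    with False G_vertex_cases[of v] \<open>W \<subseteq> G_V\<close> show "v \<in> set [3, 0, 1, 2]" by auto
  qed
  then show ?thesis by simp
qed

lemma G_fragile: "fragile G_V G_E"
  unfolding fragile_def
proof clarify
  fix W F assume sub: "subgraph W F G_V G_E" and conn: "k_connected 3 W F"
  then have "F \<subseteq> G_E" "finite W"
    unfolding subgraph_def G_V_def by (auto intro: finite_subset)
  have dense: "\<forall>w \<in> W. 2 < card {u \<in> W. u \<noteq> w \<and> {w, u} \<in> G_E}"
  proof
    fix w assume "w \<in> W"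
    have "3 \<le> card {u \<in> W. u \<noteq> w \<and> {w, u} \<in> F}"
      by (rule k_connected_min_degree[OF conn \<open>finite W\<close> \<open>w \<in> W\<close>])
    also have "\<dots> \<le> card {u \<in> W. u \<noteq> w \<and> {w, u} \<in> G_E}"
      using \<open>F \<subseteq> G_E\<close> \<open>finite W\<close> by (intro card_mono) auto
    finally show "2 < card {u \<in> W. u \<noteq> w \<and> {w, u} \<in> G_E}" by simp
  qed
  have "W = {}"
    using G_3_connected_subgraph_location[OF sub conn]
      degenerate_ordering_no_dense_subset[OF G_core_degenerate _ dense]
      degenerate_ordering_no_dense_subset[OF G_gadget_degenerate _ dense]
    by blast
  moreover have "4 \<le> card W" using conn unfolding k_connected_def by simp
  ultimately show False by simp
qed

theorem mainTheorem7:
  shows "\<exists>(V :: nat set) E. graph V E \<and> fragile V E \<and> \<not> has_C4 V E \<and> chromatic_number V E = 4"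
proof -
  have "chromatic_number G_V G_E = 4"
    using G_four_colouring G_no_three_colouring by (rule chromatic_number_eqI)
  with G_graph G_fragile G_no_C4 show ?thesis by blast
qed

end
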